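(* (i) The Posterior Belief Assessment $P_{\mathcal{Z}}(X)$ is at least as close to the truth $X$ as any observed result from a single AI system, i.e. for every element $Z_{ij}$ of $\boldsymbol{Z}$, $$\|X-P_{\mathcal{Z}}(X)\|^2\le \|X-Z_{ij}\|^2 .$$ (ii) The Posterior Belief Assessment $P_{\mathcal{Z}}(X)$ satisfies the inequality in (i) purely by virtue of being at least as close to true belief $P_t(X)$ as any observed result from a single AI system: for every $Z_{ij}$, $$\|P_t(X)-P_{\mathcal{Z}}(X)\|^2\le \|P_t(X)-Z_{ij}\|^2,$$ and this inequality is equivalent to the inequality $\|X-P_{\mathcal{Z}}(X)\|^2\le \|X-Z_{ij}\|^2$ (the common term $\|X-P_t(X)\|^2$ cancels), so that PBA is explicitly an $\mathcal{M}$-open form of inference.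
   Context: Subjectivist / Bayes linear setting: $P(\cdot)$ denotes a primitive expectation (prevision). $X$ is a (vector) quantity of interest. There are $m$ co-exchangeable classes of AI-system estimates with $n_i$ members in class $i$; $\boldsymbol{Z}=\{Z_{ij}: i=1,\dots,m;\ j=1,\dots,n_i\}$, where $Z_{ij}$ is the estimate of $X$ from the $j$th model in class $i$. Within-class exchangeability gives $Z_{ij}=\mu_i+\mathcal{R}_{ij}$ with $\mu_i$ and $\mathcal{R}_{ij}$ uncorrelated and $P(\mathcal{R}_{ij})=0$. Co-exchangeability with $X$ is assumed via $X=\sum_{i=1}^m A_i\mu_i+\boldsymbol{U}=\boldsymbol{\mathcal{A}}\boldsymbol{\mu}+\boldsymbol{U}$, with $\boldsymbol{\mathcal{A}}=(A_1,\dots,A_m)$ known and $\boldsymbol{U}$ uncorrelated with all $\mu_i$ and $\mathcal{R}_{ij}$. The inner product is $\langle X,Y\rangle=P(X^{T}Y)$ with associated norm $\|\cdot\|$. The adjusted expectation (orthogonal projection onto affine combinations of $\boldsymbol{Z}$) is $P_{\boldsymbol{Z}}(X)=P(X)+\mathrm{Cov}(X,\boldsymbol{Z})\mathrm{Var}(\boldsymbol{Z})^{\dagger}(\boldsymbol{Z}-P(\boldsymbol{Z}))$, $\dagger$ the Moore–Penrose inverse. With class sample means $\overline{Z}_i=\frac{1}{n_i}\sum_j Z_{ij}$, $\overline{\boldsymbol{Z}}=(\overline{Z}_1,\dots,\overline{Z}_m)$, set $\mathcal{Z}=P_{\overline{\boldsymbol{Z}}}(\boldsymbol{\mu})$; the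 PBA is $P_{\mathcal{Z}}(X)$, and it is known (earlier results) that $P_{\boldsymbol{Z}}(X)=P_{\mathcal{Z}}(X)=\boldsymbol{\mathcal{A}}P_{\boldsymbol{Z}}(\boldsymbol{\mu})+P(\boldsymbol{U})$. $P_t(X)$ is the prevision (true belief) for $X$ at the time $t$ by which all $Z_{ij}$ are observed; previsions are assumed conglomerable, $P(P_t(X))=P(X)$, so that for any $W$ known at time $t$, $(X-W)=(X-P_t(X))\oplus(P_t(X)-W)$ is a sum of orthogonal components. *)

theory Defs
  imports "HOL-Analysis.Analysis"
begin

text \<open>Scalar random quantities are elements of an abstract real
inner product space 'v, whose inner product is the second-moment inner product
P(X Y); the distinguished element one is the constant quantity 1, so the prevision
of a scalar quantity a is P(a) = inner a one. A vector quantity of dimension 'd is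
a function 'd \<Rightarrow> 'v.\<close>

definition prev :: "'v::real_inner \<Rightarrow> 'v \<Rightarrow> real" where
  "prev one a = inner a one"

definition cov :: "'v::real_inner \<Rightarrow> 'v \<Rightarrow> 'v \<Rightarrow> real" where
  "cov one a b = inner a b - prev one a * prev one b"

definition vinner :: "('d::finite \<Rightarrow> 'v::real_inner) \<Rightarrow> ('d \<Rightarrow> 'v) \<Rightarrow> real" where
  "vinner X Y = (\<Sum>k\<in>UNIV. inner (X k) (Y k))"

definition vnorm2 :: "('d::finite \<Rightarrow> 'v::real_inner) \<Rightarrow> real" where
  "vnorm2 X = vinner X X"

definition vdiff :: "('d \<Rightarrow> 'v::real_inner) \<Rightarrow> ('d \<Rightarrow> 'v) \<Rightarrow> ('d \<Rightarrow> 'v)" where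
  "vdiff X Y = (\<lambda>k. X k - Y k)"

text \<open>Adjusted expectation of a scalar quantity x by a finite collection S of scalar
quantities: the orthogonal projection of x onto the affine combinations of S,
i.e. onto span (insert one S).\<close>
definition adj :: "'v::real_inner \<Rightarrow> 'v set \<Rightarrow> 'v \<Rightarrow> 'v" where
  "adj one S x = (THE w. w \<in> span (insert one S) \<and>
                        (\<forall>s\<in>span (insert one S). inner (x - w) s = 0))"

definition adjv :: "'v::real_inner \<Rightarrow> 'v set \<Rightarrow> ('d \<Rightarrow> 'v) \<Rightarrow> ('d \<Rightarrow> 'v)" where
  "adjv one S X = (\<lambda>k. adj one S (X k))"

definition Zset :: "nat \<Rightarrow> (nat \<Rightarrow> nat) \<Rightarrow> (nat \<Rightarrow> nat \<Rightarrow> 'd \<Rightarrow> 'v) \<Rightarrow> 'v set" where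
  "Zset m n Z = {Z i j k | i j k. 1 \<le> i \<and> i \<le> m \<and> 1 \<le> j \<and> j \<le> n i}"

definition Zbar :: "(nat \<Rightarrow> nat) \<Rightarrow> (nat \<Rightarrow> nat \<Rightarrow> 'd \<Rightarrow> 'v::real_vector) \<Rightarrow> nat \<Rightarrow> 'd \<Rightarrow> 'v" where
  "Zbar n Z i = (\<lambda>k. (1 / real (n i)) *\<^sub>R (\<Sum>j=1..n i. Z i j k))"

definition Zbarset :: "nat \<Rightarrow> (nat \<Rightarrow> nat) \<Rightarrow> (nat \<Rightarrow> nat \<Rightarrow> 'd \<Rightarrow> 'v::real_vector) \<Rightarrow> 'v set" where
  "Zbarset m n Z = {Zbar n Z i k | i k. 1 \<le> i \<and> i \<le> m}"

definition calZ :: "'v::real_inner \<Rightarrow> nat \<Rightarrow> (nat \<Rightarrow> nat) \<Rightarrow> (nat \<Rightarrow> nat \<Rightarrow> 'd \<Rightarrow> 'v)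
                     \<Rightarrow> (nat \<Rightarrow> 'd \<Rightarrow> 'v) \<Rightarrow> nat \<Rightarrow> 'd \<Rightarrow> 'v" where
  "calZ one m n Z mu i = adjv one (Zbarset m n Z) (mu i)"

definition calZset :: "'v::real_inner \<Rightarrow> nat \<Rightarrow> (nat \<Rightarrow> nat) \<Rightarrow> (nat \<Rightarrow> nat \<Rightarrow> 'd \<Rightarrow> 'v)
                     \<Rightarrow> (nat \<Rightarrow> 'd \<Rightarrow> 'v) \<Rightarrow> 'v set" where
  "calZset one m n Z mu = {calZ one m n Z mu i k | i k. 1 \<le> i \<and> i \<le> m}"

definition PBA :: "'v::real_inner \<Rightarrow> nat \<Rightarrow> (nat \<Rightarrow> nat) \<Rightarrow> (nat \<Rightarrow> nat \<Rightarrow> 'd \<Rightarrow> 'v)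
                     \<Rightarrow> (nat \<Rightarrow> 'd \<Rightarrow> 'v) \<Rightarrow> ('d \<Rightarrow> 'v) \<Rightarrow> 'd \<Rightarrow> 'v" where
  "PBA one m n Z mu X = adjv one (calZset one m n Z mu) X"

end

theory Submission
  imports Defs
begin

text \<open>By the earlier result PBA_eq the PBA is the adjusted expectation of X by all the Z_ij,
that is, the orthogonal projection of X onto the affine combinations of the Z_ij; hence it is
the best approximation of X in that space and in particular no farther from X than any single
Z_ij. The PBA and every Z_ij are known at time t, so conglomerability makes the errors of both
orthogonal to X - P_t(X), and Pythagoras gives
||X - W||^2 = ||X - P_t(X)||^2 + ||P_t(X) - W||^2 for either of them; the common term cancels.
The exchangeability hypotheses enter only through PBA_eq.\<close>

lemma orthogonal_projection_exists:
  fixes S :: "'a::real_inner set"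
  assumes "finite S"
  obtains w where "w \<in> span S" "\<And>s. s \<in> span S \<Longrightarrow> orthogonal (x - w) s"
proof -
  obtain C where C: "finite C" "span C = span S" "pairwise orthogonal C"
    using basis_orthogonal[OF assms] by blast
  \<comment> \<open>Zero vectors in C are harmless: their coefficient is b \<bullet> x / 0 = 0.\<close>
  define w where "w = (\<Sum>b\<in>C. (b \<bullet> x / (b \<bullet> b)) *\<^sub>R b)"
  have "w \<in> span S"
    unfolding w_def C(2)[symmetric] by (intro span_sum span_scale span_base)
  moreover have "orthogonal (x - w) c" if "c \<in> C" for c
  proof -
    have "w \<bullet> c = (\<Sum>b\<in>C. (b \<bullet> x / (b \<bullet> b)) * (b \<bullet> c))"
      by (simp add: w_def inner_sum_left)
    also have "\<dots> = (\<Sum>b\<in>C. if b = c then (c \<bullet> x / (c \<bullet> c)) * (c \<bullet> c) else 0)"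
      using C(3) that by (intro sum.cong) (auto simp: pairwise_def orthogonal_def)
    also have "\<dots> = x \<bullet> c"
      using C(1) that by (cases "c = 0") (auto simp: inner_commute)
    finally show ?thesis
      by (simp add: orthogonal_def inner_diff_left)
  qed
  then have "orthogonal (x - w) s" if "s \<in> span S" for s
    using orthogonal_to_span that C(2) by blast
  ultimately show thesis using that by blast
qed

lemma orthogonal_projection_unique:
  fixes S :: "'a::real_inner set"
  assumes "w1 \<in> span S" "\<forall>s\<in>span S. orthogonal (x - w1) s"
    and "w2 \<in> span S" "\<forall>s\<in>span S. orthogonal (x - w2) s"
  shows "w1 = w2"
proof -
  have "w1 - w2 \<in> span S" using assms by (simp add: span_diff)
  then have "(x - w2) \<bullet> (w1 - w2) - (x - w1) \<bullet> (w1 - w2) = 0"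
    using assms by (simp add: orthogonal_def)
  then have "(w1 - w2) \<bullet> (w1 - w2) = 0"
    by (simp add: inner_diff_left)
  then show ?thesis by simp
qed

lemma adj_orthogonal_projection:
  fixes S :: "'v::real_inner set"
  assumes "finite S"
  shows "adj one S x \<in> span (insert one S)"
    and "\<And>s. s \<in> span (insert one S) \<Longrightarrow> orthogonal (x - adj one S x) s"
proof -
  obtain w where w: "w \<in> span (insert one S)"
    "\<And>s. s \<in> span (insert one S) \<Longrightarrow> orthogonal (x - w) s"
    using orthogonal_projection_exists[of "insert one S" x] assms by auto
  have "adj one S x = w"
    unfolding adj_def
  proof (rule the_equality)
    show "w \<in> span (insert one S) \<and> (\<forall>s\<in>span (insert one S). (x - w) \<bullet> s = 0)"
      using w by (simp add: orthogonal_def)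
    show "w' = w" if "w' \<in> span (insert one S) \<and> (\<forall>s\<in>span (insert one S). (x - w') \<bullet> s = 0)"
      for w'
      using orthogonal_projection_unique[of w' "insert one S" x w] that w
      by (simp add: orthogonal_def)
  qed
  with w show "adj one S x \<in> span (insert one S)"
    and "\<And>s. s \<in> span (insert one S) \<Longrightarrow> orthogonal (x - adj one S x) s"
    by simp_all
qed

lemma vnorm2_nonneg: "0 \<le> vnorm2 X"
  by (simp add: vnorm2_def vinner_def sum_nonneg)

lemma vnorm2_vdiff_expand:
  "vnorm2 (vdiff X W) = vnorm2 (vdiff X Y) + vnorm2 (vdiff Y W) + 2 * vinner (vdiff X Y) (vdiff Y W)"
proof -
  have "(X k - W k) \<bullet> (X k - W k) = (X k - Y k) \<bullet> (X k - Y k) + (Y k - W k) \<bullet> (Y k - W k)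
      + 2 * ((X k - Y k) \<bullet> (Y k - W k))" for k
    by (simp add: inner_diff_left inner_diff_right inner_commute algebra_simps)
  then show ?thesis
    by (simp add: vnorm2_def vinner_def vdiff_def sum.distrib sum_distrib_left)
qed

lemma vnorm2_vdiff_pythagoras:
  assumes "vinner (vdiff X Y) (vdiff Y W) = 0"
  shows "vnorm2 (vdiff X W) = vnorm2 (vdiff X Y) + vnorm2 (vdiff Y W)"
  using vnorm2_vdiff_expand[of X W Y] assms by simp

lemma adjv_in_span:
  assumes "finite S"
  shows "adjv one S X k \<in> span (insert one S)"
  unfolding adjv_def using adj_orthogonal_projection(1)[OF assms] .

lemma adjv_best_approximation:
  assumes "finite S" and W: "\<And>k. W k \<in> span (insert one S)"
  shows "vnorm2 (vdiff X (adjv one S X)) \<le> vnorm2 (vdiff X W)"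
proof -
  have "vinner (vdiff X (adjv one S X)) (vdiff (adjv one S X) W) = 0"
    unfolding vinner_def vdiff_def adjv_def
    using adj_orthogonal_projection[OF assms(1)] W by (simp add: span_diff orthogonal_def)
  then show ?thesis
    using vnorm2_vdiff_pythagoras vnorm2_nonneg by fastforce
qed

lemma finite_Zset:
  fixes Z :: "nat \<Rightarrow> nat \<Rightarrow> 'd::finite \<Rightarrow> 'v"
  shows "finite (Zset m n Z)"
proof -
  have "Zset m n Z \<subseteq> (\<lambda>(i, j, k). Z i j k) ` (SIGMA i:{1..m}. {1..n i} \<times> UNIV)"
    unfolding Zset_def by force
  then show ?thesis by (rule finite_subset) auto
qed

lemma Zset_memI:
  "1 \<le> i \<Longrightarrow> i \<le> m \<Longrightarrow> 1 \<le> j \<Longrightarrow> j \<le> n i \<Longrightarrow> Z i j k \<in> Zset m n Z"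
  unfolding Zset_def by blast

theorem theorem3p1:
  fixes one :: "'v::real_inner"
    and m :: nat and n :: "nat \<Rightarrow> nat"
    and X U Pt :: "'d::finite \<Rightarrow> 'v"
    and Z R :: "nat \<Rightarrow> nat \<Rightarrow> 'd \<Rightarrow> 'v"
    and mu :: "nat \<Rightarrow> 'd \<Rightarrow> 'v"
    and A :: "nat \<Rightarrow> 'd \<Rightarrow> 'd \<Rightarrow> real"
    and K :: "'v set"
  assumes one_norm: "inner one one = 1"
    and n_pos: "\<And>i. 1 \<le> i \<Longrightarrow> i \<le> m \<Longrightarrow> 1 \<le> n i"
    \<comment> \<open>second-order exchangeability within classes\<close>
    and exch_mean: "\<And>i j j' k. 1 \<le> i \<Longrightarrow> i \<le> m \<Longrightarrow> 1 \<le> j \<Longrightarrow> j \<le> n i \<Longrightarrow>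
              1 \<le> j' \<Longrightarrow> j' \<le> n i \<Longrightarrow> prev one (Z i j k) = prev one (Z i j' k)"
    and exch_var: "\<And>i j j' k l. 1 \<le> i \<Longrightarrow> i \<le> m \<Longrightarrow> 1 \<le> j \<Longrightarrow> j \<le> n i \<Longrightarrow>
              1 \<le> j' \<Longrightarrow> j' \<le> n i \<Longrightarrow>
              cov one (Z i j k) (Z i j l) = cov one (Z i j' k) (Z i j' l)"
    and exch_cov: "\<And>i j j1 j' j1' k l. 1 \<le> i \<Longrightarrow> i \<le> m \<Longrightarrow>
              1 \<le> j \<Longrightarrow> j \<le> n i \<Longrightarrow> 1 \<le> j1 \<Longrightarrow> j1 \<le> n i \<Longrightarrow> j \<noteq> j1 \<Longrightarrow>
              1 \<le> j' \<Longrightarrow> j' \<le> n i \<Longrightarrow> 1 \<le> j1' \<Longrightarrow> j1' \<le> n i \<Longrightarrow> j' \<noteq> j1' \<Longrightarrow>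
              cov one (Z i j k) (Z i j1 l) = cov one (Z i j' k) (Z i j1' l)"
    \<comment> \<open>co-exchangeability across classes\<close>
    and coexch: "\<And>i i' j j1 j' j1' k l. 1 \<le> i \<Longrightarrow> i \<le> m \<Longrightarrow> 1 \<le> i' \<Longrightarrow> i' \<le> m \<Longrightarrow> i \<noteq> i' \<Longrightarrow>
              1 \<le> j \<Longrightarrow> j \<le> n i \<Longrightarrow> 1 \<le> j' \<Longrightarrow> j' \<le> n i \<Longrightarrow>
              1 \<le> j1 \<Longrightarrow> j1 \<le> n i' \<Longrightarrow> 1 \<le> j1' \<Longrightarrow> j1' \<le> n i' \<Longrightarrow>
              cov one (Z i j k) (Z i' j1 l) = cov one (Z i j' k) (Z i' j1' l)"
    \<comment> \<open>representation Z_ij = mu_i + R_ij\<close>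
    and rep: "\<And>i j k. 1 \<le> i \<Longrightarrow> i \<le> m \<Longrightarrow> 1 \<le> j \<Longrightarrow> j \<le> n i \<Longrightarrow>
              Z i j k = mu i k + R i j k"
    and R_mean: "\<And>i j k. 1 \<le> i \<Longrightarrow> i \<le> m \<Longrightarrow> 1 \<le> j \<Longrightarrow> j \<le> n i \<Longrightarrow>
              prev one (R i j k) = 0"
    and mu_R_unc: "\<And>i i' j k l. 1 \<le> i \<Longrightarrow> i \<le> m \<Longrightarrow> 1 \<le> i' \<Longrightarrow> i' \<le> m \<Longrightarrow>
              1 \<le> j \<Longrightarrow> j \<le> n i' \<Longrightarrow> cov one (mu i k) (R i' j l) = 0"
    \<comment> \<open>co-exchangeability with X: X = sum_i A_i mu_i + U\<close>
    and X_rep: "\<And>k. X k = (\<Sum>i=1..m. \<Sum>l\<in>UNIV. A i k l *\<^sub>R mu i l) + U k"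
    and U_mu_unc: "\<And>i k l. 1 \<le> i \<Longrightarrow> i \<le> m \<Longrightarrow> cov one (U k) (mu i l) = 0"
    and U_R_unc: "\<And>i j k l. 1 \<le> i \<Longrightarrow> i \<le> m \<Longrightarrow> 1 \<le> j \<Longrightarrow> j \<le> n i \<Longrightarrow>
              cov one (U k) (R i j l) = 0"
    \<comment> \<open>earlier result: P_Z(X) = P_calZ(X)\<close>
    and PBA_eq: "PBA one m n Z mu X = adjv one (Zset m n Z) X"
    \<comment> \<open>K: the scalar quantities known at time t (a subspace containing 1 and all Z_ij)\<close>
    and K_sub: "subspace K"
    and K_one: "one \<in> K"
    and K_Z: "Zset m n Z \<subseteq> K"
    \<comment> \<open>conglomerability of the true belief P_t(X): X - W = (X - P_t X) (+) (P_t X - W)\<close>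
    and Pt_orth: "\<And>W. (\<forall>k. W k \<in> K) \<Longrightarrow> vinner (vdiff X Pt) (vdiff Pt W) = 0"
  shows "\<forall>i j. 1 \<le> i \<and> i \<le> m \<and> 1 \<le> j \<and> j \<le> n i \<longrightarrow>
           vnorm2 (vdiff X (PBA one m n Z mu X)) \<le> vnorm2 (vdiff X (Z i j))
         \<and> vnorm2 (vdiff Pt (PBA one m n Z mu X)) \<le> vnorm2 (vdiff Pt (Z i j))
         \<and> (vnorm2 (vdiff Pt (PBA one m n Z mu X)) \<le> vnorm2 (vdiff Pt (Z i j))
             \<longleftrightarrow> vnorm2 (vdiff X (PBA one m n Z mu X)) \<le> vnorm2 (vdiff X (Z i j)))"
proof (intro allI impI)
  fix i j assume ij: "1 \<le> i \<and> i \<le> m \<and> 1 \<le> j \<and> j \<le> n i"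
  let ?S = "Zset m n Z" and ?P = "PBA one m n Z mu X"
  have P_span: "?P k \<in> span (insert one ?S)" for k
    unfolding PBA_eq using adjv_in_span[OF finite_Zset] .
  have Z_span: "Z i j k \<in> span (insert one ?S)" for k
    using ij Zset_memI[of i m j n Z k] by (simp add: span_base)
  have close_to_X: "vnorm2 (vdiff X ?P) \<le> vnorm2 (vdiff X (Z i j))"
    unfolding PBA_eq using adjv_best_approximation[OF finite_Zset Z_span] .
  have span_K: "span (insert one ?S) \<subseteq> K"
    using K_sub K_one K_Z by (simp add: span_minimal)
  have "vnorm2 (vdiff X ?P) = vnorm2 (vdiff X Pt) + vnorm2 (vdiff Pt ?P)"
    and "vnorm2 (vdiff X (Z i j)) = vnorm2 (vdiff X Pt) + vnorm2 (vdiff Pt (Z i j))"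
    using P_span Z_span span_K by (simp_all add: vnorm2_vdiff_pythagoras Pt_orth subset_iff)
  then show "vnorm2 (vdiff X ?P) \<le> vnorm2 (vdiff X (Z i j))
      \<and> vnorm2 (vdiff Pt ?P) \<le> vnorm2 (vdiff Pt (Z i j))
      \<and> (vnorm2 (vdiff Pt ?P) \<le> vnorm2 (vdiff Pt (Z i j))
          \<longleftrightarrow> vnorm2 (vdiff X ?P) \<le> vnorm2 (vdiff X (Z i j)))"
    using close_to_X by linarith
qed

end
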